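(* Let $p=(p_1,p_2,\dots)$ be a probability distribution on the positive integers with infinite support, and let integers $n \geq 0$ and $k \geq 1$ be given. Throw $n$ balls independently into countably many bins indexed by positive integers, each ball landing in bin $i$ with probability $p_i$, and let $M_n$ be the maximum load of any bin. Let $\|p\|_k = \left(\sum_{i=1}^\infty p_i^k\right)^{1/k}$. Then \[ \Pr[\mathrm{Bin}(n, \|p\|_k) \geq k] \;\leq\; \Pr[M_n \geq k] \;\leq\; \binom{n}{k}\|p\|_k^{k}. \]
   Context: $\mathrm{Bin}(n,\alpha)$ denotes a binomial random variable with $n$ trials and success probability $\alpha$. The load of a bin is the number of balls that landed in it. *)

theory Defs
  imports "HOL-Probability.Probability"
begin

text \<open>Load of bin i after the balls described by the list xs (xs ! j = bin of ball j).\<close>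
definition load :: "nat list \<Rightarrow> nat \<Rightarrow> nat" where
  "load xs i = length (filter (\<lambda>x. x = i) xs)"

definition max_load :: "nat list \<Rightarrow> nat" where
  "max_load xs = Max (insert 0 (load xs ` set xs))"

definition pnorm :: "nat pmf \<Rightarrow> nat \<Rightarrow> real" where
  "pnorm p k = (\<Sum>i. pmf p i ^ k) powr (1 / real k)"

end

theory Submission
  imports Defs "HOL-Computational_Algebra.Formal_Power_Series"
begin

(*
  Upper bound: by the union bound it suffices that a single bin of probability x receives
  at least k of n balls with probability at most (n choose k) x^k.

  Lower bound: write T_k(z) = sum_{l<k} z^l / l! for the truncated exponential. The
  probability that each of the bins 0, ..., N-1 receives fewer than k balls is
  n! [z^n] prod_{i<N} T_k(p_i z) e^{d z}, with d = 1 - p_0 - ... - p_{N-1}, because the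
  derivative of this product of exponential generating functions mirrors conditioning on
  the first ball. Coefficientwise T_k(a z) T_k(b z) <= T_k(c z) e^{(a + b - c) z} whenever
  c^k = a^k + b^k; this reduces to the monotonicity of P[Bin(m, x/s) >= k] / x^k in x.
  Merging the bins one at a time bounds the probability by n! [z^n] T_k(c z) e^{(1 - c) z},
  which is P[Bin(n, c) < k] for c = (p_0^k + ... + p_{N-1}^k)^(1/k); now let N tend to
  infinity.
*)

definition binomial_tail :: "nat \<Rightarrow> real \<Rightarrow> real \<Rightarrow> nat \<Rightarrow> real" where
  "binomial_tail k x y m = (\<Sum>l\<le>m. if k \<le> l then real (m choose l) * x ^ l * y ^ (m - l) else 0)"

lemma binomial_tail_0: "k \<ge> 1 \<Longrightarrow> binomial_tail k x y 0 = 0"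
  by (simp add: binomial_tail_def)

lemma binomial_tail_zero_zero: "k \<ge> 1 \<Longrightarrow> binomial_tail k 0 0 m = 0"
  unfolding binomial_tail_def by (rule sum.neutral) (auto simp: power_0_left)

lemma binomial_tail_Suc:
  assumes k: "k \<ge> 1"
  shows "binomial_tail k x y (Suc m) =
    (x + y) * binomial_tail k x y m + real (m choose (k - 1)) * x ^ k * y ^ (Suc m - k)"
proof -
  obtain j where kj: "k = Suc j" using k by (cases k) auto
  \<comment> \<open>Pascal's rule \<open>(Suc m choose Suc l) = (m choose l) + (m choose Suc l)\<close> splits each term
    into an \<open>x\<close>-part \<open>h\<close> and a \<open>y\<close>-part \<open>g\<close>.\<close>
  define g where "g l = (if k \<le> l then real (m choose l) * x ^ l * y ^ (Suc m - l) else 0)" for l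
  define h where "h l = (if k \<le> Suc l then real (m choose l) * x ^ Suc l * y ^ (m - l) else 0)" for l
  have "binomial_tail k x y (Suc m) = (\<Sum>l\<le>m. h l) + (\<Sum>l\<le>m. g (Suc l))"
    unfolding binomial_tail_def sum.atMost_Suc_shift sum.distrib[symmetric] using k
    by (simp add: h_def g_def) (rule sum.cong, auto simp: distrib_right)
  also have "(\<Sum>l\<le>m. g (Suc l)) = y * binomial_tail k x y m"
  proof -
    have "(\<Sum>l\<le>m. g (Suc l)) + g 0 = (\<Sum>l\<le>Suc m. g l)"
      by (simp only: sum.atMost_Suc_shift add.commute)
    also have "\<dots> = (\<Sum>l\<le>m. g l)" by (simp add: g_def)
    also have "\<dots> = y * binomial_tail k x y m"
      unfolding binomial_tail_def sum_distrib_left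
      by (rule sum.cong) (auto simp: g_def Suc_diff_le)
    finally show ?thesis using k by (simp add: g_def)
  qed
  also have "(\<Sum>l\<le>m. h l) =
    x * binomial_tail k x y m + real (m choose (k - 1)) * x ^ k * y ^ (Suc m - k)"
  proof -
    have "(\<Sum>l\<le>m. h l) =
        (\<Sum>l\<le>m. x * (if k \<le> l then real (m choose l) * x ^ l * y ^ (m - l) else 0))
      + (\<Sum>l\<le>m. if l = k - 1 then real (m choose l) * x ^ Suc l * y ^ (m - l) else 0)"
      unfolding sum.distrib[symmetric] by (rule sum.cong) (auto simp: h_def kj)
    also have "(\<Sum>l\<le>m. if l = k - 1 then real (m choose l) * x ^ Suc l * y ^ (m - l) else 0)
      = real (m choose (k - 1)) * x ^ k * y ^ (Suc m - k)"
      using kj by auto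
    finally show ?thesis by (simp add: binomial_tail_def sum_distrib_left)
  qed
  finally show ?thesis by (simp add: algebra_simps)
qed

lemma binomial_tail_scaled_antimono:
  assumes k: "k \<ge> 1" and xy: "0 \<le> x" "x \<le> y" "y \<le> s"
  shows "x ^ k * binomial_tail k y (s - y) m \<le> y ^ k * binomial_tail k x (s - x) m"
proof (induction m)
  case 0
  then show ?case using k by (simp add: binomial_tail_0)
next
  case (Suc m)
  let ?c = "real (m choose (k - 1)) * x ^ k * y ^ k"
  have "x ^ k * binomial_tail k y (s - y) (Suc m) =
      s * (x ^ k * binomial_tail k y (s - y) m) + ?c * (s - y) ^ (Suc m - k)"
    using k by (simp add: binomial_tail_Suc algebra_simps)
  also have "\<dots> \<le> s * (y ^ k * binomial_tail k x (s - x) m) + ?c * (s - x) ^ (Suc m - k)"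
  proof (rule add_mono)
    show "s * (x ^ k * binomial_tail k y (s - y) m) \<le> s * (y ^ k * binomial_tail k x (s - x) m)"
      using Suc.IH xy by (intro mult_left_mono) auto
    show "?c * (s - y) ^ (Suc m - k) \<le> ?c * (s - x) ^ (Suc m - k)"
      using xy by (intro mult_left_mono power_mono) auto
  qed
  also have "\<dots> = y ^ k * binomial_tail k x (s - x) (Suc m)"
    using k by (simp add: binomial_tail_Suc algebra_simps)
  finally show ?case .
qed

lemma tendsto_binomial_tail [tendsto_intros]:
  assumes "(f \<longlongrightarrow> x) F" "(g \<longlongrightarrow> y) F"
  shows "((\<lambda>t. binomial_tail k (f t) (g t) m) \<longlongrightarrow> binomial_tail k x y m) F"
  unfolding binomial_tail_def
  by (intro tendsto_sum, rename_tac l, case_tac "k \<le> l") (auto intro!: tendsto_intros assms)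

lemma sum_binomial_below_eq:
  "(\<Sum>l\<le>m. real (m choose l) * (if l < k then x ^ l else 0) * y ^ (m - l)) =
    (x + y) ^ m - binomial_tail k x y m"
  unfolding binomial_tail_def binomial_ring by (auto simp: sum_subtractf[symmetric] intro!: sum.cong)

lemma binomial_tail_reflect:
  "(\<Sum>l\<le>m. if k \<le> m - l then real (m choose l) * a ^ l * b ^ (m - l) else 0) =
    binomial_tail k b a m"
proof -
  have "(\<Sum>l\<le>m. if k \<le> m - l then real (m choose l) * a ^ l * b ^ (m - l) else 0) =
      (\<Sum>l\<le>m. if k \<le> m - (m - l) then real (m choose (m - l)) * a ^ (m - l) * b ^ (m - (m - l)) else 0)"
    by (rule sum.reindex_bij_witness[where i="\<lambda>l. m - l" and j="\<lambda>l. m - l"]) auto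
  also have "\<dots> = binomial_tail k b a m"
    unfolding binomial_tail_def by (rule sum.cong) (auto simp: binomial_symmetric[symmetric] mult_ac)
  finally show ?thesis .
qed

lemma add_power_le_power_add:
  fixes a b :: "'a :: linordered_semidom"
  assumes "0 \<le> a" "0 \<le> b" "k \<ge> 1"
  shows "a ^ k + b ^ k \<le> (a + b) ^ k"
proof -
  obtain j where kj: "k = Suc j" using assms by (cases k) auto
  have "a * a ^ j + b * b ^ j \<le> a * (a + b) ^ j + b * (a + b) ^ j"
    using assms by (intro add_mono mult_left_mono power_mono) auto
  then show ?thesis by (simp add: kj algebra_simps)
qed

lemma sum_power_le_power_sum:
  fixes a :: "'a \<Rightarrow> 'b :: linordered_semidom"
  assumes "k \<ge> 1" and "\<And>i. i \<in> A \<Longrightarrow> 0 \<le> a i"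
  shows "(\<Sum>i\<in>A. a i ^ k) \<le> (\<Sum>i\<in>A. a i) ^ k"
  using assms(2)
proof (induction A rule: infinite_finite_induct)
  case (insert i A)
  have "(\<Sum>i\<in>insert i A. a i ^ k) \<le> a i ^ k + (\<Sum>i\<in>A. a i) ^ k"
    using insert by simp
  also have "\<dots> \<le> (\<Sum>i\<in>insert i A. a i) ^ k"
    using insert assms(1) by (simp add: add_power_le_power_add sum_nonneg)
  finally show ?case .
qed (use assms(1) in auto)

lemma power_eq_add_power_bounds:
  fixes a b c :: "'a :: linordered_semidom"
  assumes k: "k \<ge> 1" and nonneg: "0 \<le> a" "0 \<le> b" "0 \<le> c" and c: "c ^ k = a ^ k + b ^ k"
  shows "a \<le> c" "b \<le> c" "c \<le> a + b"
proof -
  have "a ^ k \<le> c ^ k" "b ^ k \<le> c ^ k" "c ^ k \<le> (a + b) ^ k"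
    using nonneg c add_power_le_power_add[OF nonneg(1,2) k] by simp_all
  then show "a \<le> c" "b \<le> c" "c \<le> a + b"
    using nonneg k by simp_all
qed

lemma binomial_tail_le_add:
  assumes k: "k \<ge> 1" and a: "0 \<le> a" and b: "0 \<le> b"
    and c: "0 \<le> c" "c ^ k = a ^ k + b ^ k"
  shows "binomial_tail k c (a + b - c) m \<le> binomial_tail k a b m + binomial_tail k b a m"
proof -
  note bounds = power_eq_add_power_bounds[OF k a b c]
  show ?thesis
  proof (cases "c = 0")
    case True
    then have "a = 0" "b = 0" using a b bounds by auto
    then show ?thesis using True k by (simp add: binomial_tail_zero_zero)
  next
    case False
    have "a ^ k * binomial_tail k c (a + b - c) m \<le> c ^ k * binomial_tail k a b m"
      using binomial_tail_scaled_antimono[OF k a bounds(1,3)] by simp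
    moreover have "b ^ k * binomial_tail k c (a + b - c) m \<le> c ^ k * binomial_tail k b a m"
      using binomial_tail_scaled_antimono[OF k b bounds(2,3)] by (simp add: add.commute)
    ultimately have "c ^ k * binomial_tail k c (a + b - c) m \<le>
        c ^ k * (binomial_tail k a b m + binomial_tail k b a m)"
      unfolding c(2) by (simp add: algebra_simps)
    then show ?thesis using False c(1) by (simp add: mult_le_cancel_left)
  qed
qed

text \<open>\<open>fps_exp_trunc t x\<close> is \<open>T\<^sub>t(x z)\<close>, the exponential generating function of a bin of
  probability \<open>x\<close> receiving fewer than \<open>t\<close> balls.\<close>

definition fps_exp_trunc :: "nat \<Rightarrow> real \<Rightarrow> real fps" where
  "fps_exp_trunc t x = Abs_fps (\<lambda>l. if l < t then x ^ l / fact l else 0)"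

lemma fps_exp_trunc_nth [simp]: "fps_nth (fps_exp_trunc t x) l = (if l < t then x ^ l / fact l else 0)"
  by (simp add: fps_exp_trunc_def)

lemma fps_exp_trunc_zero: "k \<ge> 1 \<Longrightarrow> fps_exp_trunc k 0 = 1"
  by (rule fps_ext) (auto simp: power_0_left)

lemma fps_deriv_fps_exp_trunc: "fps_deriv (fps_exp_trunc t x) = fps_const x * fps_exp_trunc (t - 1) x"
proof (rule fps_ext)
  fix n
  have "real (Suc n) * (x ^ Suc n / fact (Suc n)) = x * (x ^ n / fact n)"
    by (simp add: fact_Suc field_simps del: of_nat_Suc)
  then show "fps_nth (fps_deriv (fps_exp_trunc t x)) n = fps_nth (fps_const x * fps_exp_trunc (t - 1) x) n"
    by auto
qed

lemma fps_nth_mult_right_mono: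
  fixes A B C :: "'a :: ordered_semiring fps"
  assumes "\<And>n. fps_nth A n \<le> fps_nth B n" "\<And>n. 0 \<le> fps_nth C n"
  shows "fps_nth (A * C) n \<le> fps_nth (B * C) n"
  unfolding fps_mult_nth by (intro sum_mono mult_right_mono assms)

lemma fact_mult_fps_mult_nth:
  fixes X Y :: "'a :: field_char_0 fps"
  shows "fact m * fps_nth (X * Y) m =
    (\<Sum>l\<le>m. of_nat (m choose l) * (fact l * fps_nth X l) * (fact (m - l) * fps_nth Y (m - l)))"
  unfolding fps_mult_nth atLeast0AtMost sum_distrib_left
proof (rule sum.cong)
  fix l assume "l \<in> {..m}"
  then have "fact m = (fact l * fact (m - l) * of_nat (m choose l) :: 'a)"
    by (metis atMost_iff binomial_fact_lemma of_nat_fact of_nat_mult)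
  then show "fact m * (fps_nth X l * fps_nth Y (m - l)) =
      of_nat (m choose l) * (fact l * fps_nth X l) * (fact (m - l) * fps_nth Y (m - l))"
    by (simp add: mult_ac)
qed simp

lemma fact_mult_fps_exp_trunc_mult_exp_nth:
  "fact m * fps_nth (fps_exp_trunc k x * fps_exp y) m = (x + y) ^ m - binomial_tail k x y m"
  unfolding fact_mult_fps_mult_nth sum_binomial_below_eq[symmetric] by (intro sum.cong) auto

lemma fps_exp_trunc_mult_nth_eq_0:
  "2 * k \<le> Suc m \<Longrightarrow> fps_nth (fps_exp_trunc k a * fps_exp_trunc k b) m = 0"
  unfolding fps_mult_nth by (rule sum.neutral) auto

lemma fact_mult_fps_exp_trunc_mult_nth:
  assumes "Suc m < 2 * k"
  shows "fact m * fps_nth (fps_exp_trunc k a * fps_exp_trunc k b) m =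
    (a + b) ^ m - binomial_tail k a b m - binomial_tail k b a m"
proof -
  have "fact m * fps_nth (fps_exp_trunc k a * fps_exp_trunc k b) m =
    (\<Sum>l\<le>m. real (m choose l) * a ^ l * b ^ (m - l)
      - (if k \<le> l then real (m choose l) * a ^ l * b ^ (m - l) else 0)
      - (if k \<le> m - l then real (m choose l) * a ^ l * b ^ (m - l) else 0))"
    unfolding fact_mult_fps_mult_nth by (rule sum.cong) (use assms in auto)
  also have "\<dots> = (a + b) ^ m - binomial_tail k a b m - binomial_tail k b a m"
    unfolding sum_subtractf binomial_tail_reflect by (simp add: binomial_tail_def binomial_ring)
  finally show ?thesis .
qed

text \<open>The merging step: two bins of probabilities \<open>a\<close> and \<open>b\<close> are replaced by one bin of
  probability \<open>c\<close> and leftover mass \<open>a + b - c\<close> that never overflows.\<close>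

lemma fps_exp_trunc_mult_nth_le:
  assumes k: "k \<ge> 1" and a: "0 \<le> a" and b: "0 \<le> b"
    and c: "0 \<le> c" "c ^ k = a ^ k + b ^ k"
  shows "fps_nth (fps_exp_trunc k a * fps_exp_trunc k b) m \<le>
    fps_nth (fps_exp_trunc k c * fps_exp (a + b - c)) m"
proof (cases "2 * k \<le> Suc m")
  case True
  have "c \<le> a + b"
    using power_eq_add_power_bounds[OF k a b c] by simp
  then have "0 \<le> fps_nth (fps_exp_trunc k c * fps_exp (a + b - c)) m"
    using c(1) unfolding fps_mult_nth by (intro sum_nonneg) auto
  then show ?thesis using True by (simp add: fps_exp_trunc_mult_nth_eq_0)
next
  case False
  then have "fact m * fps_nth (fps_exp_trunc k a * fps_exp_trunc k b) m \<le>
      fact m * fps_nth (fps_exp_trunc k c * fps_exp (a + b - c)) m"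
    using binomial_tail_le_add[OF assms, of m]
    by (simp add: fact_mult_fps_exp_trunc_mult_nth fact_mult_fps_exp_trunc_mult_exp_nth)
  then show ?thesis by simp
qed

text \<open>\<open>loads_egf a N t d\<close> is the exponential generating function of the event that each bin
  \<open>i < N\<close>, of probability \<open>a i\<close>, receives fewer than \<open>t i\<close> balls; the remaining mass \<open>d\<close> is
  unconstrained.\<close>

definition loads_egf :: "(nat \<Rightarrow> real) \<Rightarrow> nat \<Rightarrow> (nat \<Rightarrow> nat) \<Rightarrow> real \<Rightarrow> real fps" where
  "loads_egf a N t d = (\<Prod>i<N. fps_exp_trunc (t i) (a i)) * fps_exp d"

lemma loads_egf_cong: "(\<And>i. i < N \<Longrightarrow> t i = t' i) \<Longrightarrow> loads_egf a N t d = loads_egf a N t' d"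
  unfolding loads_egf_def by (metis (no_types, lifting) lessThan_iff prod.cong)

lemma loads_egf_Suc: "loads_egf a (Suc N) t d = fps_exp_trunc (t N) (a N) * loads_egf a N t d"
  unfolding loads_egf_def by (simp add: mult_ac)

lemma loads_egf_nth_0: "fps_nth (loads_egf a N t d) 0 = (if \<forall>i<N. 0 < t i then 1 else 0)"
  by (induction N) (auto simp: loads_egf_def less_Suc_eq)

lemma fps_deriv_loads_egf:
  "fps_deriv (loads_egf a N t d) =
    fps_const d * loads_egf a N t d + (\<Sum>j<N. fps_const (a j) * loads_egf a N (t(j := t j - 1)) d)"
proof (induction N arbitrary: t)
  case 0
  then show ?case by (simp add: loads_egf_def)
next
  case (Suc N)
  let ?T = "fps_exp_trunc (t N) (a N)" and ?G = "loads_egf a N t d"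
  let ?S = "\<lambda>M. \<Sum>j<N. fps_const (a j) * loads_egf a M (t(j := t j - 1)) d"
  have S: "?S (Suc N) = ?T * ?S N"
    unfolding sum_distrib_left by (rule sum.cong) (auto simp: loads_egf_Suc mult_ac)
  have G: "loads_egf a (Suc N) (t(N := t N - 1)) d = fps_exp_trunc (t N - 1) (a N) * ?G"
    using loads_egf_cong[of N "t(N := t N - 1)" t a d] by (simp add: loads_egf_Suc)
  have "fps_deriv (loads_egf a (Suc N) t d) =
      fps_const (a N) * fps_exp_trunc (t N - 1) (a N) * ?G + ?T * (fps_const d * ?G + ?S N)"
    unfolding loads_egf_Suc fps_deriv_mult fps_deriv_fps_exp_trunc Suc.IH by (rule add.commute)
  also have "\<dots> = fps_const d * loads_egf a (Suc N) t d +
      (?S (Suc N) + fps_const (a N) * loads_egf a (Suc N) (t(N := t N - 1)) d)"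
    unfolding S G by (simp add: loads_egf_Suc algebra_simps)
  finally show ?case by (simp only: sum.lessThan_Suc)
qed

lemma loads_egf_nth_le:
  assumes k: "k \<ge> 1" and a: "\<And>i. 0 \<le> a i" and d: "0 \<le> d"
  shows "fps_nth (loads_egf a N (\<lambda>_. k) d) n \<le> fps_nth
    (fps_exp_trunc k (root k (\<Sum>i<N. a i ^ k)) * fps_exp (d + (\<Sum>i<N. a i) - root k (\<Sum>i<N. a i ^ k))) n"
proof (induction N arbitrary: n)
  case 0
  then show ?case using k by (simp add: loads_egf_def fps_exp_trunc_zero)
next
  case (Suc N)
  define c where "c = root k (\<Sum>i<N. a i ^ k)"
  define c' where "c' = root k (\<Sum>i<Suc N. a i ^ k)"
  define e where "e = d + (\<Sum>i<N. a i) - c"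
  have k0: "0 < k" using k by simp
  have c0: "0 \<le> c" and c'0: "0 \<le> c'"
    using a by (simp_all add: c_def c'_def real_root_ge_zero sum_nonneg)
  have c': "c' ^ k = a N ^ k + c ^ k"
    using a k0 by (simp add: c_def c'_def sum_nonneg)
  have "c \<le> root k ((\<Sum>i<N. a i) ^ k)"
    unfolding c_def using k0 sum_power_le_power_sum[OF k a] by simp
  then have e0: "0 \<le> e"
    using d a k0 by (simp add: e_def real_root_power_cancel sum_nonneg)
  have "fps_nth (loads_egf a (Suc N) (\<lambda>_. k) d) n =
      fps_nth (loads_egf a N (\<lambda>_. k) d * fps_exp_trunc k (a N)) n"
    by (simp add: loads_egf_Suc mult.commute)
  also have "\<dots> \<le> fps_nth ((fps_exp_trunc k c * fps_exp e) * fps_exp_trunc k (a N)) n"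
    by (rule fps_nth_mult_right_mono) (use Suc.IH a in \<open>simp_all add: c_def e_def\<close>)
  also have "\<dots> = fps_nth ((fps_exp_trunc k (a N) * fps_exp_trunc k c) * fps_exp e) n"
    by (simp add: mult_ac)
  also have "\<dots> \<le> fps_nth ((fps_exp_trunc k c' * fps_exp (a N + c - c')) * fps_exp e) n"
    by (rule fps_nth_mult_right_mono[OF fps_exp_trunc_mult_nth_le[OF k a c0 c'0 c']])
      (simp add: e0)
  also have "(fps_exp_trunc k c' * fps_exp (a N + c - c')) * fps_exp e =
      fps_exp_trunc k c' * fps_exp (d + (\<Sum>i<Suc N. a i) - c')"
    by (simp add: mult.assoc fps_exp_add_mult[symmetric] e_def algebra_simps)
  finally show ?case by (simp add: c'_def)
qed

lemma prob_replicate_pmf_Suc: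
  "measure_pmf.prob (replicate_pmf (Suc n) p) S =
    measure_pmf.expectation p (\<lambda>x. measure_pmf.prob (replicate_pmf n p) {xs. x # xs \<in> S})"
proof -
  have "replicate_pmf (Suc n) p = bind_pmf p (\<lambda>x. map_pmf (Cons x) (replicate_pmf n p))"
    by (simp add: map_pmf_def)
  then have "measure_pmf.prob (replicate_pmf (Suc n) p) S =
      measure (measure_pmf p \<bind> (\<lambda>x. measure_pmf (map_pmf (Cons x) (replicate_pmf n p)))) S"
    by (simp add: measure_pmf_bind)
  also have "\<dots> = measure_pmf.expectation p (\<lambda>x. measure_pmf.prob (map_pmf (Cons x) (replicate_pmf n p)) S)"
    by (rule measure_pmf.measure_bind[where N="count_space UNIV"])
      (auto simp: measurable_measure_pmf measure_pmf_in_subprob_algebra)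
  finally show ?thesis by (simp add: vimage_def)
qed

lemma expectation_eq_sum_if_const_outside:
  fixes f :: "'a \<Rightarrow> real"
  assumes F: "finite F" and f: "\<And>x. x \<notin> F \<Longrightarrow> f x = c"
  shows "measure_pmf.expectation p f = (\<Sum>j\<in>F. pmf p j * f j) + (1 - (\<Sum>j\<in>F. pmf p j)) * c"
proof -
  define g where "g x = f x - c" for x
  have g0: "\<And>x. x \<notin> F \<Longrightarrow> g x = 0" by (simp add: g_def f)
  have "norm (g x) \<le> (\<Sum>j\<in>F. \<bar>g j\<bar>)" for x
    using F g0[of x] by (cases "x \<in> F") (auto intro: member_le_sum simp: sum_nonneg)
  then have "integrable (measure_pmf p) g"
    by (intro measure_pmf.integrable_const_bound[where B="\<Sum>j\<in>F. \<bar>g j\<bar>"] AE_I2) auto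
  then have "measure_pmf.expectation p (\<lambda>x. g x + c) = measure_pmf.expectation p g + c"
    by simp
  then have "measure_pmf.expectation p f = measure_pmf.expectation p g + c"
    by (simp add: g_def)
  also have "measure_pmf.expectation p g = (\<Sum>j\<in>F. g j * pmf p j)"
    by (rule integral_measure_pmf_real) (use F g0 in auto)
  finally show ?thesis
    by (simp add: g_def algebra_simps sum_subtractf sum_distrib_left sum_distrib_right)
qed

lemma load_Cons: "load (x # xs) i = load xs i + (if x = i then 1 else 0)"
  by (simp add: load_def)

lemma prob_loads_less_eq_loads_egf:
  "measure_pmf.prob (replicate_pmf n p) {xs. \<forall>i<N. load xs i < t i} =
    fact n * fps_nth (loads_egf (pmf p) N t (1 - (\<Sum>i<N. pmf p i))) n"
proof (induction n arbitrary: t)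
  case 0
  show ?case by (simp add: loads_egf_nth_0 load_def indicator_def)
next
  case (Suc n)
  define d where "d = 1 - (\<Sum>i<N. pmf p i)"
  let ?G = "\<lambda>t. fact n * fps_nth (loads_egf (pmf p) N t d) n"
  have Cons_iff: "{xs. x # xs \<in> {xs. \<forall>i<N. load xs i < t i}} =
      {xs. \<forall>i<N. load xs i < (t(x := t x - 1)) i}" for x
    by (auto simp: load_Cons split: if_splits)
  have "measure_pmf.prob (replicate_pmf (Suc n) p) {xs. \<forall>i<N. load xs i < t i} =
      measure_pmf.expectation p (\<lambda>x. ?G (t(x := t x - 1)))"
    unfolding prob_replicate_pmf_Suc Cons_iff Suc.IH d_def ..
  also have "\<dots> = (\<Sum>j<N. pmf p j * ?G (t(j := t j - 1))) + d * ?G t"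
  proof (subst expectation_eq_sum_if_const_outside[where F="{..<N}" and c="?G t"])
    fix x assume "x \<notin> {..<N}"
    then have "loads_egf (pmf p) N (t(x := t x - 1)) d = loads_egf (pmf p) N t d"
      by (intro loads_egf_cong) auto
    then show "?G (t(x := t x - 1)) = ?G t" by simp
  qed (simp_all add: d_def)
  also have "\<dots> = fact n * fps_nth (fps_deriv (loads_egf (pmf p) N t d)) n"
    unfolding fps_deriv_loads_egf by (simp add: fps_sum_nth algebra_simps sum_distrib_left)
  also have "\<dots> = fact (Suc n) * fps_nth (loads_egf (pmf p) N t d) (Suc n)"
    by (simp add: fact_Suc)
  finally show ?case by (simp add: d_def)
qed

lemma prob_load_ge_le:
  "measure_pmf.prob (replicate_pmf n p) {xs. load xs i \<ge> k} \<le> real (n choose k) * pmf p i ^ k"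
proof (induction n arbitrary: k)
  case 0
  then show ?case by (cases k) (auto simp: load_def indicator_def)
next
  case (Suc n)
  show ?case
  proof (cases k)
    case (Suc j)
    let ?P = "\<lambda>k. measure_pmf.prob (replicate_pmf n p) {xs. load xs i \<ge> k}"
    have "{xs. x # xs \<in> {xs. load xs i \<ge> k}} = {xs. load xs i \<ge> (if x = i then j else k)}" for x
      by (auto simp: load_Cons Suc)
    then have "measure_pmf.prob (replicate_pmf (Suc n) p) {xs. load xs i \<ge> k} =
        measure_pmf.expectation p (\<lambda>x. ?P (if x = i then j else k))"
      by (simp only: prob_replicate_pmf_Suc)
    also have "\<dots> = pmf p i * ?P j + (1 - pmf p i) * ?P k"
      by (subst expectation_eq_sum_if_const_outside[where F="{i}" and c="?P k"]) auto
    also have "\<dots> \<le> pmf p i * (real (n choose j) * pmf p i ^ j) + 1 * (real (n choose k) * pmf p i ^ k)"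
      using Suc.IH[of j] Suc.IH[of k] by (intro add_mono mult_mono mult_left_mono) auto
    also have "\<dots> = real (Suc n choose k) * pmf p i ^ k"
      by (simp add: Suc algebra_simps)
    finally show ?thesis .
  qed simp
qed

lemma max_load_ge_iff:
  assumes "k \<ge> 1"
  shows "k \<le> max_load xs \<longleftrightarrow> (\<exists>i. k \<le> load xs i)"
proof
  assume "k \<le> max_load xs"
  moreover have "max_load xs \<in> insert 0 (load xs ` set xs)"
    unfolding max_load_def by (rule Max_in) auto
  ultimately show "\<exists>i. k \<le> load xs i"
    using assms by (auto simp: max_load_def)
next
  assume "\<exists>i. k \<le> load xs i"
  then obtain i where i: "k \<le> load xs i" by blast
  then have "load xs i \<noteq> 0" using assms by simp
  then have "i \<in> set xs" by (auto simp: load_def filter_empty_conv)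
  then have "load xs i \<le> max_load xs"
    unfolding max_load_def by (intro Max_ge) auto
  then show "k \<le> max_load xs" using i by simp
qed

lemma prob_binomial_pmf_atLeast:
  assumes "0 \<le> q" "q \<le> 1"
  shows "measure_pmf.prob (binomial_pmf n q) {k..} = binomial_tail k q (1 - q) n"
proof -
  have "set_pmf (binomial_pmf n q) \<subseteq> {..n}"
    using assms by (auto simp: set_pmf_binomial_eq split: if_splits)
  then have "measure_pmf.prob (binomial_pmf n q) {k..} = measure_pmf.prob (binomial_pmf n q) {l\<in>{..n}. k \<le> l}"
    by (intro measure_pmf.finite_measure_eq_AE AE_pmfI) auto
  also have "\<dots> = (\<Sum>l\<in>{l\<in>{..n}. k \<le> l}. pmf (binomial_pmf n q) l)"
    by (simp add: measure_measure_pmf_finite)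
  also have "\<dots> = binomial_tail k q (1 - q) n"
    unfolding binomial_tail_def sum.inter_filter[OF finite_atMost, symmetric] using assms by simp
  finally show ?thesis .
qed

lemma sum_pmf_power_le_1:
  fixes p :: "nat pmf"
  assumes "k \<ge> 1"
  shows "(\<Sum>i<N. pmf p i ^ k) \<le> 1"
proof -
  have "(\<Sum>i<N. pmf p i ^ k) \<le> (\<Sum>i<N. pmf p i)"
    using assms by (intro sum_mono power_decreasing[of 1 k, simplified]) (auto simp: pmf_le_1)
  also have "\<dots> = measure_pmf.prob p {..<N}"
    by (simp add: measure_measure_pmf_finite)
  finally show ?thesis
    using measure_pmf.prob_le_1 order_trans by blast
qed

lemma summable_pmf_power: "k \<ge> 1 \<Longrightarrow> summable (\<lambda>i. pmf p i ^ k)"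
  by (rule summableI_nonneg_bounded[where x=1]) (simp_all add: sum_pmf_power_le_1)

lemma pnorm_power:
  assumes "k \<ge> 1"
  shows "pnorm p k ^ k = (\<Sum>i. pmf p i ^ k)" and "pnorm p k = root k (\<Sum>i. pmf p i ^ k)"
proof -
  have "0 \<le> (\<Sum>i. pmf p i ^ k)"
    using summable_pmf_power[OF assms] by (intro suminf_nonneg) auto
  then show "pnorm p k = root k (\<Sum>i. pmf p i ^ k)"
    using assms by (simp add: pnorm_def root_powr_inverse)
  then show "pnorm p k ^ k = (\<Sum>i. pmf p i ^ k)"
    using assms \<open>0 \<le> (\<Sum>i. pmf p i ^ k)\<close> by simp
qed

lemma pnorm_nonneg: "0 \<le> pnorm p k"
  by (simp add: pnorm_def)

lemma pnorm_le_1: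
  assumes "k \<ge> 1"
  shows "pnorm p k \<le> 1"
proof -
  have "(\<Sum>i. pmf p i ^ k) \<le> 1"
    using assms by (intro suminf_le_const summable_pmf_power sum_pmf_power_le_1)
  then show ?thesis
    using assms by (simp add: pnorm_power(2))
qed

lemma prob_max_load_ge_le:
  assumes k: "k \<ge> 1"
  shows "measure_pmf.prob (replicate_pmf n p) {xs. max_load xs \<ge> k} \<le> real (n choose k) * pnorm p k ^ k"
proof -
  let ?P = "\<lambda>i. measure_pmf.prob (replicate_pmf n p) {xs. k \<le> load xs i}"
  have summable: "summable (\<lambda>i. real (n choose k) * pmf p i ^ k)"
    by (intro summable_mult summable_pmf_power k)
  then have "summable ?P"
    by (rule summable_comparison_test'[where N=0]) (simp add: prob_load_ge_le)
  moreover have "{xs. max_load xs \<ge> k} = (\<Union>i. {xs. k \<le> load xs i})"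
    using max_load_ge_iff[OF k] by auto
  ultimately have "measure_pmf.prob (replicate_pmf n p) {xs. max_load xs \<ge> k} \<le> (\<Sum>i. ?P i)"
    by (simp add: measure_pmf.finite_measure_subadditive_countably)
  also have "\<dots> \<le> (\<Sum>i. real (n choose k) * pmf p i ^ k)"
    by (rule suminf_le[OF _ \<open>summable ?P\<close> summable]) (simp add: prob_load_ge_le)
  also have "\<dots> = real (n choose k) * pnorm p k ^ k"
    using suminf_mult[OF summable_pmf_power[OF k]] by (simp add: pnorm_power(1)[OF k])
  finally show ?thesis .
qed

lemma prob_loads_less_le:
  fixes p :: "nat pmf" and N :: nat
  assumes k: "k \<ge> 1"
  defines "c \<equiv> root k (\<Sum>i<N. pmf p i ^ k)"
  shows "measure_pmf.prob (replicate_pmf n p) {xs. \<forall>i<N. load xs i < k} \<le> 1 - binomial_tail k c (1 - c) n"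
proof -
  define d where "d = 1 - (\<Sum>i<N. pmf p i)"
  have "d = 1 - measure_pmf.prob p {..<N}"
    by (simp add: d_def measure_measure_pmf_finite)
  then have "0 \<le> d" by simp
  have "measure_pmf.prob (replicate_pmf n p) {xs. \<forall>i<N. load xs i < k} =
      fact n * fps_nth (loads_egf (pmf p) N (\<lambda>_. k) d) n"
    by (simp add: prob_loads_less_eq_loads_egf d_def)
  also have "\<dots> \<le> fact n * fps_nth (fps_exp_trunc k c * fps_exp (d + (\<Sum>i<N. pmf p i) - c)) n"
    using loads_egf_nth_le[OF k _ \<open>0 \<le> d\<close>, of "pmf p" N n] by (simp add: c_def)
  also have "\<dots> = (c + (1 - c)) ^ n - binomial_tail k c (1 - c) n"
    unfolding fact_mult_fps_exp_trunc_mult_exp_nth[symmetric] by (simp add: d_def)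
  finally show ?thesis by simp
qed

lemma prob_binomial_le_prob_max_load_ge:
  assumes k: "k \<ge> 1"
  shows "measure_pmf.prob (binomial_pmf n (pnorm p k)) {k..} \<le>
    measure_pmf.prob (replicate_pmf n p) {xs. max_load xs \<ge> k}"
proof -
  define c where "c N = root k (\<Sum>i<N. pmf p i ^ k)" for N
  let ?q = "pnorm p k"
  have "c \<longlonglongrightarrow> ?q"
    unfolding c_def pnorm_power(2)[OF k]
    by (intro tendsto_real_root summable_LIMSEQ summable_pmf_power k)
  then have "(\<lambda>N. binomial_tail k (c N) (1 - c N) n) \<longlonglongrightarrow> binomial_tail k ?q (1 - ?q) n"
    by (intro tendsto_intros)
  moreover have "binomial_tail k (c N) (1 - c N) n \<le>
      measure_pmf.prob (replicate_pmf n p) {xs. max_load xs \<ge> k}" for N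
  proof -
    have "binomial_tail k (c N) (1 - c N) n \<le>
        1 - measure_pmf.prob (replicate_pmf n p) {xs. \<forall>i<N. load xs i < k}"
      using prob_loads_less_le[OF k, where p=p and N=N and n=n] by (simp add: c_def)
    also have "\<dots> = measure_pmf.prob (replicate_pmf n p)
        (space (replicate_pmf n p) - {xs. \<forall>i<N. load xs i < k})"
      by (rule measure_pmf.prob_compl[symmetric]) simp
    also have "\<dots> \<le> measure_pmf.prob (replicate_pmf n p) {xs. max_load xs \<ge> k}"
      using max_load_ge_iff[OF k] by (intro measure_pmf.finite_measure_mono) (auto simp: not_less)
    finally show ?thesis .
  qed
  ultimately have "binomial_tail k ?q (1 - ?q) n \<le>
      measure_pmf.prob (replicate_pmf n p) {xs. max_load xs \<ge> k}"
    by (intro LIMSEQ_le_const2) auto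
  moreover have "measure_pmf.prob (binomial_pmf n ?q) {k..} = binomial_tail k ?q (1 - ?q) n"
    using pnorm_nonneg pnorm_le_1[OF k] by (rule prob_binomial_pmf_atLeast)
  ultimately show ?thesis by simp
qed

theorem mainTheorem11:
  fixes p :: "nat pmf" and n k :: nat
  assumes "set_pmf p \<subseteq> {1..}"
    and "infinite (set_pmf p)"
    and "k \<ge> 1"
  shows "measure_pmf.prob (binomial_pmf n (pnorm p k)) {k..}
           \<le> measure_pmf.prob (replicate_pmf n p) {xs. max_load xs \<ge> k}
      \<and> measure_pmf.prob (replicate_pmf n p) {xs. max_load xs \<ge> k}
           \<le> real (n choose k) * pnorm p k ^ k"
  using prob_binomial_le_prob_max_load_ge[OF \<open>k \<ge> 1\<close>] prob_max_load_ge_le[OF \<open>k \<ge> 1\<close>] by blast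

end
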